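(* For every $n\ge 4$ and every integer $\ell\ge 1$, there is no perfect lattice code in $\mathcal{A}(n,n-2,\ell)$.
   Context: For integers $n\ge 1$, $0\le t\le n$, $\ell\ge 1$, let $\mathcal{S}(n,t,\ell)=\{\mathcal{E}=(\varepsilon_1,\dots,\varepsilon_n)\in\mathbb{Z}^n: 0\le\varepsilon_i\le\ell \text{ for all } i,\ w_H(\mathcal{E})\le t\}$, where $w_H$ is the number of nonzero coordinates. A lattice here is an integer lattice: the set of integer combinations of $n$ linearly independent vectors of $\mathbb{Z}^n$. $\mathcal{A}(n,t,\ell)$ is the set of lattices $\mathcal{L}\subseteq\mathbb{Z}^n$ that are packings with $\mathcal{S}(n,t,\ell)$, i.e. the translates $X+\mathcal{S}(n,t,\ell)$, $X\in\mathcal{L}$, are pairwise disjoint (lattice codes correcting $t$ asymmetric errors of limited magnitude $\ell$). Such $\mathcal{L}$ is perfect if these translates also cover $\mathbb{Z}^n$. *)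

theory Defs
  imports Complex_Main
begin

text \<open>Vectors of \<int>^n are represented as functions nat \<Rightarrow> int that vanish
  at all indices \<ge> n (coordinates are indexed 0..n-1).\<close>

definition zvec :: "nat \<Rightarrow> (nat \<Rightarrow> int) set" where
  "zvec n = {x. \<forall>i\<ge>n. x i = 0}"

definition vadd :: "(nat \<Rightarrow> int) \<Rightarrow> (nat \<Rightarrow> int) \<Rightarrow> (nat \<Rightarrow> int)" where
  "vadd x y = (\<lambda>j. x j + y j)"

definition hweight :: "nat \<Rightarrow> (nat \<Rightarrow> int) \<Rightarrow> nat" where
  "hweight n e = card {i. i < n \<and> e i \<noteq> 0}"

definition err_shape :: "nat \<Rightarrow> nat \<Rightarrow> nat \<Rightarrow> (nat \<Rightarrow> int) set" where
  "err_shape n t l = {e \<in> zvec n. (\<forall>i<n. 0 \<le> e i \<and> e i \<le> int l) \<and> hweight n e \<le> t}"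

definition lin_indep_int :: "nat \<Rightarrow> (nat \<Rightarrow> nat \<Rightarrow> int) \<Rightarrow> bool" where
  "lin_indep_int n b \<longleftrightarrow>
     (\<forall>c :: nat \<Rightarrow> real. (\<forall>j<n. (\<Sum>i<n. c i * real_of_int (b i j)) = 0) \<longrightarrow> (\<forall>i<n. c i = 0))"

definition int_lattice :: "nat \<Rightarrow> (nat \<Rightarrow> int) set \<Rightarrow> bool" where
  "int_lattice n L \<longleftrightarrow>
     (\<exists>b :: nat \<Rightarrow> nat \<Rightarrow> int. (\<forall>i<n. b i \<in> zvec n) \<and> lin_indep_int n b \<and>
        L = {(\<lambda>j. \<Sum>i<n. c i * b i j) | c :: nat \<Rightarrow> int. True})"

definition is_packing :: "(nat \<Rightarrow> int) set \<Rightarrow> (nat \<Rightarrow> int) set \<Rightarrow> bool" where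
  "is_packing L S \<longleftrightarrow>
     (\<forall>X\<in>L. \<forall>Y\<in>L. X \<noteq> Y \<longrightarrow> (vadd X ` S) \<inter> (vadd Y ` S) = {})"

definition lattice_codes :: "nat \<Rightarrow> nat \<Rightarrow> nat \<Rightarrow> (nat \<Rightarrow> int) set set" where
  "lattice_codes n t l = {L. int_lattice n L \<and> is_packing L (err_shape n t l)}"

definition is_perfect :: "nat \<Rightarrow> nat \<Rightarrow> nat \<Rightarrow> (nat \<Rightarrow> int) set \<Rightarrow> bool" where
  "is_perfect n t l L \<longleftrightarrow> (\<forall>z\<in>zvec n. \<exists>X\<in>L. z \<in> vadd X ` err_shape n t l)"

end

theory Submission
  imports Defs
begin

text \<open>Let \<open>S\<close> be the error shape. A packing lattice meets \<open>S - S\<close> only in \<open>0\<close>, so a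
  nonzero lattice vector with entries in \<open>[-l, l]\<close> has at least \<open>n - 1\<close> positive or at least
  \<open>n - 1\<close> negative entries. Covering \<open>1 - e\<^sub>i\<close> puts some \<open>1 - m e\<^sub>i\<close> with \<open>1 \<le> m \<le> l + 1\<close>
  into the lattice, and the difference of two such vectors with \<open>m \<le> l\<close> lies in \<open>S - S\<close>; hence
  \<open>m = l + 1\<close> for all coordinates but one. For \<open>l \<ge> 2\<close> the negated sum of two such vectors
  (entries \<open>l - 1\<close> twice and \<open>-2\<close> elsewhere) lies in \<open>S - S\<close>. For \<open>l = 1\<close>, covering \<open>-e\<^sub>k\<close>
  as \<open>X + s\<close> and adding \<open>1 - 2e\<^sub>i\<close> for a zero \<open>i \<noteq> k\<close> of \<open>s\<close> gives a vector in \<open>S - S\<close>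
  whose entry at \<open>i\<close> is \<open>-1\<close>.\<close>

lemma int_latticeE:
  assumes "int_lattice n L"
  obtains b where "\<forall>i<n. b i \<in> zvec n"
    and "L = {(\<lambda>j. \<Sum>i<n. c i * b i j) | c :: nat \<Rightarrow> int. True}"
  using assms unfolding int_lattice_def by blast

lemma int_lattice_zero:
  assumes "int_lattice n L"
  shows "(\<lambda>_. 0) \<in> L"
proof -
  obtain b where L: "L = {(\<lambda>j. \<Sum>i<n. c i * b i j) | c :: nat \<Rightarrow> int. True}"
    using assms by (rule int_latticeE)
  show ?thesis unfolding L by (intro CollectI exI[of _ "\<lambda>_. 0"]) simp
qed

lemma int_lattice_add:
  assumes "int_lattice n L" "X \<in> L" "Y \<in> L"
  shows "(\<lambda>j. X j + Y j) \<in> L"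
proof -
  obtain b where L: "L = {(\<lambda>j. \<Sum>i<n. c i * b i j) | c :: nat \<Rightarrow> int. True}"
    using assms(1) by (rule int_latticeE)
  obtain c c' where "X = (\<lambda>j. \<Sum>i<n. c i * b i j)" "Y = (\<lambda>j. \<Sum>i<n. c' i * b i j)"
    using assms(2,3) unfolding L by blast
  then have "(\<lambda>j. X j + Y j) = (\<lambda>j. \<Sum>i<n. (c i + c' i) * b i j)"
    by (simp add: sum.distrib distrib_right)
  then show ?thesis unfolding L by (intro CollectI exI[of _ "\<lambda>i. c i + c' i"]) simp
qed

lemma int_lattice_uminus:
  assumes "int_lattice n L" "X \<in> L"
  shows "(\<lambda>j. - X j) \<in> L"
proof -
  obtain b where L: "L = {(\<lambda>j. \<Sum>i<n. c i * b i j) | c :: nat \<Rightarrow> int. True}"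
    using assms(1) by (rule int_latticeE)
  obtain c where "X = (\<lambda>j. \<Sum>i<n. c i * b i j)"
    using assms(2) unfolding L by blast
  then have "(\<lambda>j. - X j) = (\<lambda>j. \<Sum>i<n. (- c i) * b i j)"
    by (simp add: sum_negf[symmetric])
  then show ?thesis unfolding L by (intro CollectI exI[of _ "\<lambda>i. - c i"]) simp
qed

lemma int_lattice_diff:
  assumes "int_lattice n L" "X \<in> L" "Y \<in> L"
  shows "(\<lambda>j. X j - Y j) \<in> L"
  using int_lattice_add[OF assms(1,2) int_lattice_uminus[OF assms(1,3)]] by simp

lemma int_lattice_zvec:
  assumes "int_lattice n L" "X \<in> L"
  shows "X \<in> zvec n"
proof -
  obtain b where b: "\<forall>i<n. b i \<in> zvec n"
    and L: "L = {(\<lambda>j. \<Sum>i<n. c i * b i j) | c :: nat \<Rightarrow> int. True}"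
    using assms(1) by (rule int_latticeE)
  obtain c where "X = (\<lambda>j. \<Sum>i<n. c i * b i j)"
    using assms(2) unfolding L by blast
  then show ?thesis using b by (simp add: zvec_def)
qed

lemma err_shapeD:
  assumes "e \<in> err_shape n t l"
  shows "\<And>j. j < n \<Longrightarrow> 0 \<le> e j" "\<And>j. j < n \<Longrightarrow> e j \<le> int l"
    "\<And>j. n \<le> j \<Longrightarrow> e j = 0" "card {j. j < n \<and> e j \<noteq> 0} \<le> t"
  using assms by (auto simp: err_shape_def zvec_def hweight_def)

lemma err_shape_zero_coordinate:
  assumes "e \<in> err_shape n t l" "t + 1 < n" "a < n"
  obtains j where "j < n" "j \<noteq> a" "e j = 0"
proof (rule ccontr)
  assume "\<not> thesis"
  then have "\<forall>j. j < n \<and> j \<noteq> a \<longrightarrow> e j \<noteq> 0" using that by blast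
  then have "{..<n} - {a} \<subseteq> {j. j < n \<and> e j \<noteq> 0}" by auto
  then have "card ({..<n} - {a}) \<le> card {j. j < n \<and> e j \<noteq> 0}" by (intro card_mono) auto
  then have "card ({..<n} - {a}) \<le> t" using err_shapeD(4)[OF assms(1)] by linarith
  then show False using assms(2,3) by simp
qed

text \<open>If \<open>d = d\<^sup>+ - d\<^sup>-\<close> with both parts in the shape, then \<open>d + d\<^sup>- = 0 + d\<^sup>+\<close>.\<close>

lemma packing_lattice_small_vector_eq_0:
  assumes lat: "int_lattice n L" and pack: "is_packing L (err_shape n t l)" and "d \<in> L"
    and bound: "\<And>j. j < n \<Longrightarrow> \<bar>d j\<bar> \<le> int l"
    and pos: "card {j. j < n \<and> 0 < d j} \<le> t" and neg: "card {j. j < n \<and> d j < 0} \<le> t"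
  shows "d = (\<lambda>_. 0)"
proof (rule ccontr)
  assume "d \<noteq> (\<lambda>_. 0)"
  define dp where "dp = (\<lambda>j. max (d j) 0)"
  define dm where "dm = (\<lambda>j. max (- d j) 0)"
  have d_zvec: "d \<in> zvec n" using lat \<open>d \<in> L\<close> by (rule int_lattice_zvec)
  have "{j. j < n \<and> dp j \<noteq> 0} = {j. j < n \<and> 0 < d j}" by (auto simp: dp_def)
  then have dp: "dp \<in> err_shape n t l"
    using d_zvec bound pos by (auto simp: err_shape_def zvec_def hweight_def dp_def abs_le_iff)
  have "{j. j < n \<and> dm j \<noteq> 0} = {j. j < n \<and> d j < 0}" by (auto simp: dm_def)
  then have dm: "dm \<in> err_shape n t l"
    using d_zvec bound neg by (auto simp: err_shape_def zvec_def hweight_def dm_def abs_le_iff)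
  have eq: "vadd d dm = vadd (\<lambda>_. 0) dp" by (auto simp: vadd_def dm_def dp_def)
  have "vadd d ` err_shape n t l \<inter> vadd (\<lambda>_. 0) ` err_shape n t l = {}"
    using pack \<open>d \<in> L\<close> int_lattice_zero[OF lat] \<open>d \<noteq> (\<lambda>_. 0)\<close>
    unfolding is_packing_def by blast
  moreover have "vadd d dm \<in> vadd d ` err_shape n t l" using dm by (rule imageI)
  moreover have "vadd d dm \<in> vadd (\<lambda>_. 0) ` err_shape n t l" unfolding eq using dp by (rule imageI)
  ultimately show False by blast
qed

lemma card_subset_pair_le:
  assumes "A \<subseteq> {a, b}"
  shows "card A \<le> 2"
proof -
  have "card A \<le> card {a, b}" using assms by (intro card_mono) auto
  also have "\<dots> \<le> 2" by (simp add: card_insert_if)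
  finally show ?thesis .
qed

lemma card_subset_lessThan_minus_pair_le:
  assumes "A \<subseteq> {..<n} - {a, b}" "a < n" "b < n" "a \<noteq> b"
  shows "card A \<le> n - 2"
  using card_mono[OF _ assms(1)] assms(2-4) by (simp add: card_Diff_subset)

locale perfect_code =
  fixes n l :: nat and L :: "(nat \<Rightarrow> int) set"
  assumes n_ge_4: "4 \<le> n" and l_ge_1: "1 \<le> l"
    and lattice: "int_lattice n L"
    and packing: "is_packing L (err_shape n (n - 2) l)"
    and perfect: "is_perfect n (n - 2) l L"
begin

abbreviation S :: "(nat \<Rightarrow> int) set" where
  "S \<equiv> err_shape n (n - 2) l"

lemma cover:
  assumes "z \<in> zvec n"
  obtains X s where "X \<in> L" "s \<in> S" "\<And>j. X j = z j - s j"
proof -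
  obtain X s where "X \<in> L" "s \<in> S" "z = vadd X s"
    using perfect assms unfolding is_perfect_def by blast
  then show ?thesis using that by (simp add: vadd_def)
qed

lemma lattice_vector_eq_0:
  assumes "d \<in> L" "\<And>j. j < n \<Longrightarrow> \<bar>d j\<bar> \<le> int l"
    and "card {j. j < n \<and> 0 < d j} \<le> n - 2" "card {j. j < n \<and> d j < 0} \<le> n - 2"
  shows "d j = 0"
  using packing_lattice_small_vector_eq_0[OF lattice packing assms] by simp

lemma card_subset_pair_le_n_minus_2:
  "A \<subseteq> {a, b} \<Longrightarrow> card A \<le> n - 2"
  using card_subset_pair_le n_ge_4 by fastforce

definition ones_minus_unit :: "int \<Rightarrow> nat \<Rightarrow> nat \<Rightarrow> int" where
  "ones_minus_unit m i = (\<lambda>j. (if j < n then 1 else 0) - (if j = i then m else 0))"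

lemma ones_minus_unit_in_lattice:
  assumes "i < n"
  obtains m where "1 \<le> m" "m \<le> int l + 1" "ones_minus_unit m i \<in> L"
proof -
  have "ones_minus_unit 1 i \<in> zvec n" using assms by (simp add: zvec_def ones_minus_unit_def)
  then obtain X s where X: "X \<in> L" and s: "s \<in> S"
    and Xs: "\<And>j. X j = ones_minus_unit 1 i j - s j"
    by (rule cover) blast
  note s_bounds = err_shapeD[OF s]
  have X_eq: "X j = (if j < n \<and> j \<noteq> i then 1 else 0) - s j" for j
    using assms by (simp add: Xs ones_minus_unit_def)
  have s_off_i: "s j = 0" if j: "j < n" "j \<noteq> i" for j
  proof (rule ccontr)
    assume sj: "s j \<noteq> 0"
    obtain k where k: "k < n" "k \<noteq> i" "s k = 0"
      by (rule err_shape_zero_coordinate[OF s _ assms]) (use n_ge_4 in auto)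
    have pos: "{t. t < n \<and> 0 < X t} \<subseteq> {..<n} - {i, j}"
    proof
      fix t assume "t \<in> {t. t < n \<and> 0 < X t}"
      with s_bounds(1)[of t] sj show "t \<in> {..<n} - {i, j}" by (auto simp: X_eq split: if_splits)
    qed
    have neg: "{t. t < n \<and> X t < 0} \<subseteq> {t. t < n \<and> s t \<noteq> 0}"
      by (auto simp: X_eq)
    have "X k = 0"
    proof (rule lattice_vector_eq_0[OF X])
      show "\<bar>X t\<bar> \<le> int l" if "t < n" for t
        using s_bounds(1,2)[OF that] l_ge_1 by (auto simp: X_eq)
      show "card {t. t < n \<and> 0 < X t} \<le> n - 2"
        using card_subset_lessThan_minus_pair_le[OF pos assms j(1)] j(2) by simp
      show "card {t. t < n \<and> X t < 0} \<le> n - 2"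
        using card_mono[OF _ neg] s_bounds(4) by simp
    qed
    with k show False by (simp add: X_eq)
  qed
  have "X = ones_minus_unit (1 + s i) i"
  proof
    fix j
    show "X j = ones_minus_unit (1 + s i) i j"
      using s_off_i[of j] s_bounds(3)[of j] assms by (cases "j < n") (auto simp: X_eq ones_minus_unit_def)
  qed
  then show ?thesis using X s_bounds(1,2)[OF assms] by (intro that[of "1 + s i"]) auto
qed

lemma ones_minus_unit_short_unique:
  assumes "i < n" "j < n" "ones_minus_unit a i \<in> L" "ones_minus_unit b j \<in> L"
    and "1 \<le> a" "a \<le> int l" "1 \<le> b" "b \<le> int l"
  shows "i = j"
proof (rule ccontr)
  assume "i \<noteq> j"
  define d where "d = (\<lambda>t. ones_minus_unit a i t - ones_minus_unit b j t)"
  have "d \<in> L" unfolding d_def using lattice assms(3,4) by (rule int_lattice_diff)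
  have d: "d t = (if t = j then b else 0) - (if t = i then a else 0)" for t
    by (simp add: d_def ones_minus_unit_def)
  have "{t. t < n \<and> 0 < d t} \<subseteq> {i, j}" "{t. t < n \<and> d t < 0} \<subseteq> {i, j}"
    using assms by (auto simp: d split: if_splits)
  then have "d j = 0"
    using assms by (intro lattice_vector_eq_0[OF \<open>d \<in> L\<close>] card_subset_pair_le_n_minus_2) (auto simp: d)
  with \<open>i \<noteq> j\<close> assms show False by (simp add: d)
qed

lemma ones_minus_unit_long_unique:
  assumes "2 \<le> l" "i < n" "j < n"
    and "ones_minus_unit (int l + 1) i \<in> L" "ones_minus_unit (int l + 1) j \<in> L"
  shows "i = j"
proof (rule ccontr)
  assume "i \<noteq> j"
  define d where "d = (\<lambda>t. - (ones_minus_unit (int l + 1) i t + ones_minus_unit (int l + 1) j t))"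
  have "d \<in> L" unfolding d_def using lattice int_lattice_add[OF lattice assms(4,5)]
    by (rule int_lattice_uminus)
  have d: "d t = (if t = i \<or> t = j then int l - 1 else -2)" if "t < n" for t
    using \<open>i \<noteq> j\<close> that by (simp add: d_def ones_minus_unit_def)
  have "{t. t < n \<and> 0 < d t} \<subseteq> {i, j}" "{t. t < n \<and> d t < 0} \<subseteq> {..<n} - {i, j}"
    using assms(1) by (auto simp: d split: if_splits)
  then have "d i = 0"
    using assms \<open>i \<noteq> j\<close>
    by (intro lattice_vector_eq_0[OF \<open>d \<in> L\<close>] card_subset_pair_le_n_minus_2
        card_subset_lessThan_minus_pair_le) (auto simp: d)
  with assms show False by (simp add: d)
qed

lemma ones_minus_unit_2_notin_lattice:
  assumes "l = 1" "k < n"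
  shows "\<exists>i<n. i \<noteq> k \<and> ones_minus_unit 2 i \<notin> L"
proof (rule ccontr)
  assume "\<not> ?thesis"
  then have V2: "ones_minus_unit 2 i \<in> L" if "i < n" "i \<noteq> k" for i
    using that by blast
  have "(\<lambda>j. if j = k then -1 else 0) \<in> zvec n" using assms(2) by (simp add: zvec_def)
  then obtain X s where X: "X \<in> L" and s: "s \<in> S"
    and Xs: "\<And>j. X j = (if j = k then -1 else 0) - s j"
    by (rule cover) blast
  note s_bounds = err_shapeD[OF s]
  obtain i where i: "i < n" "i \<noteq> k" "s i = 0"
    by (rule err_shape_zero_coordinate[OF s _ assms(2)]) (use n_ge_4 in auto)
  define d where "d = (\<lambda>t. X t + ones_minus_unit 2 i t)"
  have "d \<in> L" unfolding d_def using lattice X V2[OF i(1,2)] by (rule int_lattice_add)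
  have d: "d t = (if t = k then - s t else if t = i then -1 else 1 - s t)" if "t < n" for t
    using i that by (simp add: d_def Xs ones_minus_unit_def)
  have "{t. t < n \<and> 0 < d t} \<subseteq> {..<n} - {i, k}"
  proof
    fix t assume "t \<in> {t. t < n \<and> 0 < d t}"
    with s_bounds(1)[of t] i show "t \<in> {..<n} - {i, k}" by (auto simp: d split: if_splits)
  qed
  moreover have "{t. t < n \<and> d t < 0} \<subseteq> {i, k}"
  proof
    fix t assume "t \<in> {t. t < n \<and> d t < 0}"
    with s_bounds(2)[of t] assms(1) show "t \<in> {i, k}" by (auto simp: d split: if_splits)
  qed
  ultimately have "d i = 0"
    using s_bounds(1,2) assms i
    by (intro lattice_vector_eq_0[OF \<open>d \<in> L\<close>] card_subset_pair_le_n_minus_2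
        card_subset_lessThan_minus_pair_le) (auto simp: d)
  with i show False by (simp add: d)
qed

lemma ones_minus_unit_long_all_but_one:
  obtains k where "k < n" "\<And>i. i < n \<Longrightarrow> i \<noteq> k \<Longrightarrow> ones_minus_unit (int l + 1) i \<in> L"
proof -
  have long: "ones_minus_unit (int l + 1) i \<in> L"
    if i: "i < n" and no_short: "\<nexists>m. 1 \<le> m \<and> m \<le> int l \<and> ones_minus_unit m i \<in> L" for i
  proof -
    obtain m where m: "1 \<le> m" "m \<le> int l + 1" "ones_minus_unit m i \<in> L"
      by (rule ones_minus_unit_in_lattice[OF i])
    with no_short have "m = int l + 1" by (meson not_le order.antisym zless_imp_add1_zle)
    with m(3) show ?thesis by simp
  qed
  show ?thesis
  proof (cases "\<exists>k<n. \<exists>m. 1 \<le> m \<and> m \<le> int l \<and> ones_minus_unit m k \<in> L")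
    case True
    then obtain k m where k: "k < n" "1 \<le> m" "m \<le> int l" "ones_minus_unit m k \<in> L"
      by blast
    have others: "ones_minus_unit (int l + 1) i \<in> L" if "i < n" "i \<noteq> k" for i
      using long[OF that(1)] ones_minus_unit_short_unique[OF that(1) k(1) _ k(4) _ _ k(2,3)] that(2)
      by blast
    show ?thesis by (rule that[OF k(1) others])
  next
    case False
    with long n_ge_4 show ?thesis by (intro that[of 0]) auto
  qed
qed

lemma no_perfect_code: False
proof -
  obtain k where k: "k < n"
    and long: "\<And>i. i < n \<Longrightarrow> i \<noteq> k \<Longrightarrow> ones_minus_unit (int l + 1) i \<in> L"
    by (rule ones_minus_unit_long_all_but_one) blast
  show False
  proof (cases "l = 1")
    case True
    with long ones_minus_unit_2_notin_lattice[OF True k] show False by auto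
  next
    case False
    then have "2 \<le> l" using l_ge_1 by simp
    define i where "i = (if k = 0 then 1 else 0 :: nat)"
    define j where "j = (if k = 2 then 1 else 2 :: nat)"
    have "i < n" "j < n" "i \<noteq> k" "j \<noteq> k" "i \<noteq> j"
      using n_ge_4 by (auto simp: i_def j_def)
    with ones_minus_unit_long_unique[OF \<open>2 \<le> l\<close>] long show False by blast
  qed
qed

end

theorem mainTheorem5:
  fixes n l :: nat
  assumes "n \<ge> 4" and "l \<ge> 1"
  shows "\<not> (\<exists>L \<in> lattice_codes n (n - 2) l. is_perfect n (n - 2) l L)"
proof
  assume "\<exists>L \<in> lattice_codes n (n - 2) l. is_perfect n (n - 2) l L"
  then obtain L where "int_lattice n L" "is_packing L (err_shape n (n - 2) l)"
    "is_perfect n (n - 2) l L"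
    unfolding lattice_codes_def by blast
  then interpret perfect_code n l L using assms by unfold_locales
  show False by (rule no_perfect_code)
qed

end
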